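(* Let $m\geq 2$ and $2\leq n\leq m+1$ be integers, let $T_n$ be any tree with $n$ vertices and let $\overline{K_m}$ be the edgeless graph on $m$ vertices. Then $\chi_L(T_n\odot\overline{K_m})=m+1$.
   Context: All graphs are finite and simple. A $k$-coloring of a connected graph $G$ is a map $c:V(G)\to\{1,\dots,k\}$ with $c(u)\neq c(v)$ for adjacent $u,v$; it induces the partition $\Pi=\{C_1,\dots,C_k\}$ into color classes $C_i=c^{-1}(i)$. The color code of $v$ is $c_\Pi(v)=(d(v,C_1),\dots,d(v,C_k))$ with $d(v,C_i)=\min\{d(v,x): x\in C_i\}$ (graph distance). $c$ is a locating coloring if distinct vertices have distinct color codes; the locating-chromatic number $\chi_L(G)$ is the least $k$ for which a locating $k$-coloring exists. The corona product $G\odot H$ of a graph $G$ with vertex set $\{a_1,\dots,a_n\}$ and a graph $H$ is obtained from one copy of $G$ and $n$ disjoint copies of $H$ by joining $a_i$ to every vertex of the $i$-th copy of $H$. *)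

theory Defs
  imports Main
begin

definition simple_graph :: "'a set \<Rightarrow> ('a \<Rightarrow> 'a \<Rightarrow> bool) \<Rightarrow> bool" where
  "simple_graph V E \<longleftrightarrow> finite V \<and> (\<forall>u v. E u v \<longrightarrow> u \<in> V \<and> v \<in> V)
     \<and> (\<forall>u v. E u v \<longrightarrow> E v u) \<and> (\<forall>u. \<not> E u u)"

definition is_walk :: "'a set \<Rightarrow> ('a \<Rightarrow> 'a \<Rightarrow> bool) \<Rightarrow> 'a list \<Rightarrow> bool" where
  "is_walk V E xs \<longleftrightarrow> xs \<noteq> [] \<and> set xs \<subseteq> V \<and> (\<forall>i. Suc i < length xs \<longrightarrow> E (xs ! i) (xs ! Suc i))"

definition connected_graph :: "'a set \<Rightarrow> ('a \<Rightarrow> 'a \<Rightarrow> bool) \<Rightarrow> bool" where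
  "connected_graph V E \<longleftrightarrow> V \<noteq> {} \<and>
     (\<forall>u\<in>V. \<forall>v\<in>V. \<exists>xs. is_walk V E xs \<and> hd xs = u \<and> last xs = v)"

definition has_cycle :: "'a set \<Rightarrow> ('a \<Rightarrow> 'a \<Rightarrow> bool) \<Rightarrow> bool" where
  "has_cycle V E \<longleftrightarrow> (\<exists>xs. length xs \<ge> 3 \<and> distinct xs \<and> is_walk V E xs \<and> E (last xs) (hd xs))"

definition is_tree :: "'a set \<Rightarrow> ('a \<Rightarrow> 'a \<Rightarrow> bool) \<Rightarrow> bool" where
  "is_tree V E \<longleftrightarrow> simple_graph V E \<and> connected_graph V E \<and> \<not> has_cycle V E"

definition gdist :: "'a set \<Rightarrow> ('a \<Rightarrow> 'a \<Rightarrow> bool) \<Rightarrow> 'a \<Rightarrow> 'a \<Rightarrow> nat" where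
  "gdist V E u v = (LEAST k. \<exists>xs. is_walk V E xs \<and> hd xs = u \<and> last xs = v \<and> length xs = Suc k)"

definition setdist :: "'a set \<Rightarrow> ('a \<Rightarrow> 'a \<Rightarrow> bool) \<Rightarrow> 'a \<Rightarrow> 'a set \<Rightarrow> nat" where
  "setdist V E v C = Min (gdist V E v ` C)"

definition is_coloring :: "'a set \<Rightarrow> ('a \<Rightarrow> 'a \<Rightarrow> bool) \<Rightarrow> nat \<Rightarrow> ('a \<Rightarrow> nat) \<Rightarrow> bool" where
  "is_coloring V E k c \<longleftrightarrow> c ` V = {1..k} \<and> (\<forall>u v. E u v \<longrightarrow> c u \<noteq> c v)"

definition color_class :: "'a set \<Rightarrow> ('a \<Rightarrow> nat) \<Rightarrow> nat \<Rightarrow> 'a set" where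
  "color_class V c i = {x \<in> V. c x = i}"

definition color_code :: "'a set \<Rightarrow> ('a \<Rightarrow> 'a \<Rightarrow> bool) \<Rightarrow> nat \<Rightarrow> ('a \<Rightarrow> nat) \<Rightarrow> 'a \<Rightarrow> nat list" where
  "color_code V E k c v = map (\<lambda>i. setdist V E v (color_class V c i)) [1..<Suc k]"

definition locating_coloring :: "'a set \<Rightarrow> ('a \<Rightarrow> 'a \<Rightarrow> bool) \<Rightarrow> nat \<Rightarrow> ('a \<Rightarrow> nat) \<Rightarrow> bool" where
  "locating_coloring V E k c \<longleftrightarrow> is_coloring V E k c \<and> inj_on (color_code V E k c) V"

definition locating_chromatic_number :: "'a set \<Rightarrow> ('a \<Rightarrow> 'a \<Rightarrow> bool) \<Rightarrow> nat" where
  "locating_chromatic_number V E = (LEAST k. \<exists>c. locating_coloring V E k c)"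

text \<open>Corona product G \<odot> H: vertex a of G is Inl a; vertex x of the copy of H
  attached to a is Inr (a, x).\<close>
definition corona_vertices :: "'a set \<Rightarrow> 'b set \<Rightarrow> ('a + 'a \<times> 'b) set" where
  "corona_vertices V W = Inl ` V \<union> Inr ` (V \<times> W)"

fun corona_edge :: "'a set \<Rightarrow> ('a \<Rightarrow> 'a \<Rightarrow> bool) \<Rightarrow> 'b set \<Rightarrow> ('b \<Rightarrow> 'b \<Rightarrow> bool)
    \<Rightarrow> ('a + 'a \<times> 'b) \<Rightarrow> ('a + 'a \<times> 'b) \<Rightarrow> bool" where
  "corona_edge V E W F (Inl u) (Inl v) = E u v"
| "corona_edge V E W F (Inr (a, x)) (Inr (b, y)) = (a = b \<and> a \<in> V \<and> F x y)"
| "corona_edge V E W F (Inl u) (Inr (a, x)) = (u = a \<and> u \<in> V \<and> x \<in> W)"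
| "corona_edge V E W F (Inr (a, x)) (Inl u) = (u = a \<and> u \<in> V \<and> x \<in> W)"

definition empty_graph_vertices :: "nat \<Rightarrow> nat set" where
  "empty_graph_vertices m = {..<m}"

definition no_edges :: "nat \<Rightarrow> nat \<Rightarrow> bool" where
  "no_edges x y = False"

end

theory Submission
  imports Defs
begin

text \<open>The m pendant vertices attached to a base vertex a are twins: swapping two of them is
  an automorphism, so in a locating colouring they must get distinct colours, all different
  from the colour of a. Hence at least m + 1 colours are needed.
  Conversely, give the base vertices distinct colours (possible since there are at most m + 1
  of them) and the pendant vertices at a the remaining m colours. A base vertex sees every
  colour within distance 1, while a pendant vertex misses some colour at distance 1 (its only
  neighbour is a, and there are at least three colours). The colour of a base vertex and, for a
  pendant vertex, its own colour together with the colour of its neighbour then determine the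
  vertex.\<close>

lemma is_walk_singleton [simp]: "is_walk V E [x] \<longleftrightarrow> x \<in> V"
  by (auto simp: is_walk_def)

lemma is_walk_Cons_Cons:
  "is_walk V E (x # y # zs) \<longleftrightarrow> x \<in> V \<and> E x y \<and> is_walk V E (y # zs)"
  by (auto simp: is_walk_def nth_Cons less_Suc_eq_0_disj split: nat.splits)

definition reachable :: "'a set \<Rightarrow> ('a \<Rightarrow> 'a \<Rightarrow> bool) \<Rightarrow> 'a \<Rightarrow> 'a \<Rightarrow> bool" where
  "reachable V E u v \<longleftrightarrow> (\<exists>xs. is_walk V E xs \<and> hd xs = u \<and> last xs = v)"

lemma connected_graph_iff_reachable:
  "connected_graph V E \<longleftrightarrow> V \<noteq> {} \<and> (\<forall>u\<in>V. \<forall>v\<in>V. reachable V E u v)"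
  by (simp add: connected_graph_def reachable_def)

lemma reachable_refl: "u \<in> V \<Longrightarrow> reachable V E u u"
  unfolding reachable_def by (rule exI[of _ "[u]"]) simp

lemma reachable_Cons: "u \<in> V \<Longrightarrow> E u v \<Longrightarrow> reachable V E v w \<Longrightarrow> reachable V E u w"
  unfolding reachable_def
  by (metis is_walk_Cons_Cons is_walk_def last_ConsR list.collapse list.sel(1))

lemma reachable_edge: "u \<in> V \<Longrightarrow> v \<in> V \<Longrightarrow> E u v \<Longrightarrow> reachable V E u v"
  by (blast intro: reachable_Cons reachable_refl)

lemma reachable_trans:
  assumes "reachable V E u v" and "reachable V E v w"
  shows "reachable V E u w"
proof -
  have "reachable V E (hd xs) w" if "is_walk V E xs" "reachable V E (last xs) w" for xs
    using that
  proof (induction xs rule: induct_list012)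
    case (3 x y zs)
    then show ?case by (auto simp: is_walk_Cons_Cons intro: reachable_Cons)
  qed (simp_all add: is_walk_def)
  with assms show ?thesis unfolding reachable_def[of V E u v] by blast
qed

lemma gdist_le:
  "is_walk V E xs \<Longrightarrow> hd xs = u \<Longrightarrow> last xs = w \<Longrightarrow> length xs = Suc k \<Longrightarrow> gdist V E u w \<le> k"
  unfolding gdist_def by (rule Least_le) blast

lemma shortest_walk_exists:
  assumes "reachable V E u w"
  obtains xs where "is_walk V E xs" "hd xs = u" "last xs = w" "length xs = Suc (gdist V E u w)"
proof -
  obtain xs where xs: "is_walk V E xs" "hd xs = u" "last xs = w"
    using assms reachable_def by metis
  then have "length xs = Suc (length xs - 1)"
    by (cases xs) (auto simp: is_walk_def)
  with xs have "\<exists>k xs. is_walk V E xs \<and> hd xs = u \<and> last xs = w \<and> length xs = Suc k"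
    by blast
  from LeastI_ex[OF this] that show ?thesis unfolding gdist_def by blast
qed

lemma gdist_eq_0_iff:
  assumes "reachable V E u w" and "u \<in> V"
  shows "gdist V E u w = 0 \<longleftrightarrow> u = w"
proof
  assume "gdist V E u w = 0"
  then obtain xs where "hd xs = u" "last xs = w" "length xs = 1"
    using shortest_walk_exists[OF assms(1)] by auto
  then show "u = w" by (cases xs) auto
qed (use gdist_le[of V E "[u]" u u 0] assms(2) in simp)

lemma gdist_eq_1_iff:
  assumes "reachable V E u w" and "u \<in> V" and "w \<in> V"
  shows "gdist V E u w = 1 \<longleftrightarrow> u \<noteq> w \<and> E u w"
proof
  assume d: "gdist V E u w = 1"
  then obtain xs where xs: "is_walk V E xs" "hd xs = u" "last xs = w" "length xs = Suc 1"
    using shortest_walk_exists[OF assms(1)] by metis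
  then obtain a b where "xs = [a, b]"
    by (cases xs; cases "tl xs") auto
  with xs d show "u \<noteq> w \<and> E u w"
    using gdist_eq_0_iff[OF assms(1,2)] by (simp add: is_walk_Cons_Cons)
next
  assume "u \<noteq> w \<and> E u w"
  then show "gdist V E u w = 1"
    using gdist_eq_0_iff[OF assms(1,2)] gdist_le[of V E "[u, w]" u w 1] assms(2,3)
    by (simp add: is_walk_Cons_Cons)
qed

lemma setdist_eq_0_iff:
  assumes "connected_graph V E" "finite V" "v \<in> V" "C \<subseteq> V" "C \<noteq> {}"
  shows "setdist V E v C = 0 \<longleftrightarrow> v \<in> C"
proof -
  have dist0: "gdist V E v w = 0 \<longleftrightarrow> v = w" if "w \<in> C" for w
    using assms(1,3,4) that gdist_eq_0_iff[of V E v w]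
    by (auto simp: connected_graph_iff_reachable)
  have "finite C" using assms(2,4) finite_subset by blast
  then have "setdist V E v C = 0 \<longleftrightarrow> (\<exists>w\<in>C. gdist V E v w = 0)"
    unfolding setdist_def using assms(5) by (auto simp: Min_eq_iff)
  also have "\<dots> \<longleftrightarrow> v \<in> C"
    using dist0 by blast
  finally show ?thesis .
qed

lemma setdist_eq_1_iff:
  assumes "connected_graph V E" "finite V" "v \<in> V" "C \<subseteq> V" "C \<noteq> {}"
  shows "setdist V E v C = 1 \<longleftrightarrow> v \<notin> C \<and> (\<exists>w\<in>C. E v w)"
proof -
  have dist01: "(gdist V E v w = 0 \<longleftrightarrow> v = w) \<and> (gdist V E v w = 1 \<longleftrightarrow> v \<noteq> w \<and> E v w)"
    if "w \<in> C" for w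
    using assms(1,3,4) that gdist_eq_0_iff[of V E v w] gdist_eq_1_iff[of V E v w]
    by (auto simp: connected_graph_iff_reachable)
  have "finite C" using assms(2,4) finite_subset by blast
  then have "setdist V E v C = 1 \<longleftrightarrow> (\<exists>w\<in>C. gdist V E v w = 1) \<and> (\<forall>w\<in>C. gdist V E v w \<noteq> 0)"
    unfolding setdist_def using assms(5) by (auto simp: Min_eq_iff Suc_le_eq intro: rev_image_eqI)
  also have "\<dots> \<longleftrightarrow> v \<notin> C \<and> (\<exists>w\<in>C. E v w)"
    using dist01 by blast
  finally show ?thesis .
qed

lemma gdist_involution_invariant:
  assumes "\<sigma> ` V \<subseteq> V" and "\<And>u v. E u v \<Longrightarrow> E (\<sigma> u) (\<sigma> v)" and "\<And>x. \<sigma> (\<sigma> x) = x"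
  shows "gdist V E (\<sigma> u) (\<sigma> w) = gdist V E u w"
proof -
  let ?walk = "\<lambda>u w k. \<exists>xs. is_walk V E xs \<and> hd xs = u \<and> last xs = w \<and> length xs = Suc k"
  have map_walk: "?walk (\<sigma> u) (\<sigma> w) k" if walk: "?walk u w k" for u w k
  proof -
    obtain xs where xs: "is_walk V E xs" "hd xs = u" "last xs = w" "length xs = Suc k"
      using walk by blast
    then have "is_walk V E (map \<sigma> xs)" and "xs \<noteq> []"
      using assms(1,2) by (auto simp: is_walk_def image_subset_iff subset_iff)
    with xs show ?thesis
      by (intro exI[of _ "map \<sigma> xs"]) (auto simp: hd_map last_map)
  qed
  have "?walk (\<sigma> u) (\<sigma> w) = ?walk u w"
    using map_walk[of u w] map_walk[of "\<sigma> u" "\<sigma> w"] assms(3) by fastforce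
  then show ?thesis unfolding gdist_def by simp
qed

text \<open>Swapping two twins is an automorphism preserving all colour classes, so the twins
  have the same colour code.\<close>

lemma locating_coloring_twins_colors_differ:
  assumes loc: "locating_coloring V E k c" and "u \<in> V" "w \<in> V" "u \<noteq> w"
    and twin_out: "\<And>x. E u x \<longleftrightarrow> E w x" and twin_in: "\<And>x. E x u \<longleftrightarrow> E x w"
  shows "c u \<noteq> c w"
proof
  assume same_color: "c u = c w"
  define \<sigma> where "\<sigma> = id(u := w, w := u)"
  have \<sigma>_involution: "\<sigma> (\<sigma> x) = x" for x by (simp add: \<sigma>_def)
  have \<sigma>_V: "\<sigma> ` V \<subseteq> V" using assms(2,3) by (auto simp: \<sigma>_def)
  have \<sigma>_edge: "E (\<sigma> p) (\<sigma> q)" if "E p q" for p q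
    using that twin_out twin_in by (auto simp: \<sigma>_def)
  have \<sigma>_class: "\<sigma> ` color_class V c i = color_class V c i" for i
  proof -
    have into: "\<sigma> ` color_class V c i \<subseteq> color_class V c i" for i
      using \<sigma>_V same_color by (auto simp: color_class_def \<sigma>_def)
    have "color_class V c i = \<sigma> ` \<sigma> ` color_class V c i"
      by (simp add: image_image \<sigma>_involution)
    also have "\<dots> \<subseteq> \<sigma> ` color_class V c i"
      using into by (rule image_mono)
    finally show ?thesis using into by (rule subset_antisym[rotated])
  qed
  have "gdist V E u ` color_class V c i = gdist V E w ` color_class V c i" for i
  proof -
    have "gdist V E u ` color_class V c i = gdist V E (\<sigma> w) ` \<sigma> ` color_class V c i"
      by (simp only: \<sigma>_class) (simp add: \<sigma>_def)
    also have "\<dots> = gdist V E w ` color_class V c i"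
      using gdist_involution_invariant[of \<sigma> V E] \<sigma>_V \<sigma>_edge \<sigma>_involution
      by (simp add: image_image)
    finally show ?thesis .
  qed
  then have "color_code V E k c u = color_code V E k c w"
    by (simp add: color_code_def setdist_def)
  with loc assms(2-4) show False
    by (auto simp: locating_coloring_def dest: inj_onD)
qed

lemma color_code_eq_iff:
  "color_code V E k c u = color_code V E k c w \<longleftrightarrow>
   (\<forall>i\<in>{1..k}. setdist V E u (color_class V c i) = setdist V E w (color_class V c i))"
  by (auto simp: color_code_def)

lemma color_class_nonempty:
  assumes "is_coloring V E k c" "i \<in> {1..k}"
  shows "color_class V c i \<noteq> {}"
proof -
  from assms obtain v where "v \<in> V" "c v = i"
    unfolding is_coloring_def by (metis imageE)
  then show ?thesis by (auto simp: color_class_def)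
qed

lemma setdist_color_class_eq_0_iff:
  assumes "connected_graph V E" "finite V" "is_coloring V E k c" "v \<in> V" "i \<in> {1..k}"
  shows "setdist V E v (color_class V c i) = 0 \<longleftrightarrow> c v = i"
proof -
  have "color_class V c i \<noteq> {}"
    using color_class_nonempty[OF assms(3,5)] .
  then show ?thesis
    using setdist_eq_0_iff[OF assms(1,2,4)] assms(4) by (auto simp: color_class_def)
qed

lemma setdist_color_class_eq_1_iff:
  assumes "connected_graph V E" "finite V" "is_coloring V E k c" "v \<in> V" "i \<in> {1..k}"
  shows "setdist V E v (color_class V c i) = 1 \<longleftrightarrow> c v \<noteq> i \<and> (\<exists>w\<in>V. c w = i \<and> E v w)"
proof -
  have "color_class V c i \<noteq> {}"
    using color_class_nonempty[OF assms(3,5)] .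
  then show ?thesis
    using setdist_eq_1_iff[OF assms(1,2,4)] assms(4) by (auto simp: color_class_def)
qed

lemma corona_vertices_cases [consumes 1, case_names base leaf]:
  assumes "p \<in> corona_vertices V W"
  obtains a where "p = Inl a" "a \<in> V" | a x where "p = Inr (a, x)" "a \<in> V" "x \<in> W"
  using assms by (auto simp: corona_vertices_def)

lemma finite_corona_vertices: "finite V \<Longrightarrow> finite W \<Longrightarrow> finite (corona_vertices V W)"
  by (simp add: corona_vertices_def)

lemma connected_corona:
  assumes "connected_graph V E"
  shows "connected_graph (corona_vertices V W) (corona_edge V E W F)"
proof -
  let ?V = "corona_vertices V W" and ?E = "corona_edge V E W F"
  have base_reach: "reachable ?V ?E (Inl a) (Inl b)" if ab: "a \<in> V" "b \<in> V" for a b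
  proof -
    obtain xs where xs: "is_walk V E xs" "hd xs = a" "last xs = b"
      using assms ab unfolding connected_graph_def by blast
    then have "is_walk ?V ?E (map Inl xs)" and "xs \<noteq> []"
      by (auto simp: is_walk_def corona_vertices_def)
    with xs show ?thesis
      unfolding reachable_def by (intro exI[of _ "map Inl xs"]) (simp add: hd_map last_map)
  qed
  have anchored: "\<exists>a\<in>V. reachable ?V ?E p (Inl a) \<and> reachable ?V ?E (Inl a) p" if "p \<in> ?V" for p
    using that
  proof (cases rule: corona_vertices_cases)
    case (base a)
    then show ?thesis using reachable_refl[OF that] by blast
  next
    case (leaf a x)
    then have "Inl a \<in> ?V" "?E p (Inl a)" "?E (Inl a) p"
      by (simp_all add: corona_vertices_def)
    then show ?thesis
      using reachable_edge[OF that] reachable_edge[of "Inl a" ?V p] that leaf(2) by blast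
  qed
  have "reachable ?V ?E p q" if pq: "p \<in> ?V" "q \<in> ?V" for p q
  proof -
    obtain a b where "a \<in> V" "b \<in> V" "reachable ?V ?E p (Inl a)" "reachable ?V ?E (Inl b) q"
      using anchored[OF pq(1)] anchored[OF pq(2)] by blast
    then show ?thesis
      using base_reach reachable_trans by metis
  qed
  moreover have "?V \<noteq> {}"
    using assms by (auto simp: connected_graph_def corona_vertices_def)
  ultimately show ?thesis by (simp add: connected_graph_iff_reachable)
qed

text \<open>The pendant vertices at a receive the colours in {1..m + 1} - {f a} in increasing order.\<close>

definition corona_coloring :: "('a \<Rightarrow> nat) \<Rightarrow> 'a + 'a \<times> nat \<Rightarrow> nat" where
  "corona_coloring f p =
     (case p of Inl a \<Rightarrow> f a | Inr (a, x) \<Rightarrow> if x + 1 < f a then x + 1 else x + 2)"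

lemma corona_coloring_simps [simp]:
  "corona_coloring f (Inl a) = f a"
  "corona_coloring f (Inr (a, x)) = (if x + 1 < f a then x + 1 else x + 2)"
  by (simp_all add: corona_coloring_def)

lemma corona_coloring_leaf_inj:
  "corona_coloring f (Inr (a, x)) = corona_coloring f (Inr (a, y)) \<Longrightarrow> x = y"
  by (auto split: if_splits)

lemma corona_coloring_leaf_colors:
  assumes "f a \<in> {1..m + 1}" "i \<in> {1..m + 1}" "i \<noteq> f a"
  shows "\<exists>x<m. corona_coloring f (Inr (a, x)) = i"
proof (cases "i < f a")
  case True
  with assms show ?thesis by (intro exI[of _ "i - 1"]) auto
next
  case False
  with assms show ?thesis by (intro exI[of _ "i - 2"]) auto
qed

lemma mem_empty_graph_vertices [simp]: "x \<in> empty_graph_vertices m \<longleftrightarrow> x < m"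
  by (simp add: empty_graph_vertices_def)

context
  fixes V :: "'a set" and E :: "'a \<Rightarrow> 'a \<Rightarrow> bool" and m :: nat
begin

abbreviation "CV \<equiv> corona_vertices V (empty_graph_vertices m)"
abbreviation "CE \<equiv> corona_edge V E (empty_graph_vertices m) no_edges"

lemma corona_leaf_in [simp]: "Inr (a, x) \<in> CV \<longleftrightarrow> a \<in> V \<and> x < m"
  by (auto simp: corona_vertices_def)

lemma corona_base_in [simp]: "Inl a \<in> CV \<longleftrightarrow> a \<in> V"
  by (auto simp: corona_vertices_def)

lemma corona_leaf_edge_iff [simp]:
  "CE (Inr (a, x)) q \<longleftrightarrow> q = Inl a \<and> a \<in> V \<and> x < m"
  "CE q (Inr (a, x)) \<longleftrightarrow> q = Inl a \<and> a \<in> V \<and> x < m"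
  by (cases q; auto simp: no_edges_def empty_graph_vertices_def)+

lemma corona_edge_cases [consumes 1, case_names base_base base_leaf leaf_base]:
  assumes "CE p q"
  obtains a b where "p = Inl a" "q = Inl b" "E a b"
  | a x where "p = Inl a" "q = Inr (a, x)"
  | a x where "p = Inr (a, x)" "q = Inl a"
  using assms by (cases "(V, E, empty_graph_vertices m, no_edges, p, q)" rule: corona_edge.cases)
    (auto simp: no_edges_def)

lemma corona_locating_coloring_ge:
  assumes loc: "locating_coloring CV CE k c" and a: "a \<in> V"
  shows "m + 1 \<le> k"
proof -
  let ?leaf_colors = "(\<lambda>x. c (Inr (a, x))) ` {..<m}"
  have proper: "c p \<noteq> c q" if "CE p q" for p q
    using loc that by (simp add: locating_coloring_def is_coloring_def)
  have "c (Inr (a, x)) \<noteq> c (Inr (a, y))" if "x < m" "y < m" "x \<noteq> y" for x y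
    by (rule locating_coloring_twins_colors_differ[OF loc]) (use a that in auto)
  then have "card ?leaf_colors = m"
    by (subst card_image) (auto simp: inj_on_def)
  moreover have "c (Inl a) \<noteq> c (Inr (a, x))" if "x < m" for x
    using proper[of "Inl a" "Inr (a, x)"] a that by simp
  then have "c (Inl a) \<notin> ?leaf_colors"
    by auto
  moreover have "insert (c (Inl a)) ?leaf_colors \<subseteq> {1..k}"
    using loc a by (auto simp: locating_coloring_def is_coloring_def)
  ultimately show ?thesis
    using card_mono[of "{1..k}" "insert (c (Inl a)) ?leaf_colors"] by simp
qed

context
  fixes f :: "'a \<Rightarrow> nat"
  assumes simple: "simple_graph V E" and connected: "connected_graph V E" and m: "2 \<le> m"
    and f_inj: "inj_on f V" and f_range: "f ` V \<subseteq> {1..m + 1}"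
begin

lemma corona_coloring_range: "p \<in> CV \<Longrightarrow> corona_coloring f p \<in> {1..m + 1}"
  using f_range by (auto elim!: corona_vertices_cases)

lemma corona_coloring_is_coloring: "is_coloring CV CE (m + 1) (corona_coloring f)"
proof -
  obtain a where a: "a \<in> V"
    using connected by (auto simp: connected_graph_def)
  have "i \<in> corona_coloring f ` CV" if i: "i \<in> {1..m + 1}" for i
  proof (cases "i = f a")
    case True
    with a show ?thesis by (intro image_eqI[of _ _ "Inl a"]) simp_all
  next
    case False
    have "f a \<in> {1..m + 1}" using f_range a by auto
    then obtain x where "x < m" "corona_coloring f (Inr (a, x)) = i"
      using corona_coloring_leaf_colors[of f a m i] i False by blast
    with a show ?thesis by (intro image_eqI[of _ _ "Inr (a, x)"]) simp_all
  qed
  then have "{1..m + 1} \<subseteq> corona_coloring f ` CV" ..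
  moreover have "corona_coloring f ` CV \<subseteq> {1..m + 1}"
    using corona_coloring_range by (rule image_subsetI)
  moreover have "corona_coloring f p \<noteq> corona_coloring f q" if "CE p q" for p q
    using that
  proof (cases rule: corona_edge_cases)
    case (base_base a b)
    with f_inj simple show ?thesis
      by (auto simp: simple_graph_def dest: inj_onD)
  qed simp_all
  ultimately show ?thesis
    unfolding is_coloring_def by blast
qed

abbreviation "color_dist p i \<equiv> setdist CV CE p (color_class CV (corona_coloring f) i)"

lemma corona_color_dist_eq_0_iff:
  "p \<in> CV \<Longrightarrow> i \<in> {1..m + 1} \<Longrightarrow> color_dist p i = 0 \<longleftrightarrow> corona_coloring f p = i"
  by (rule setdist_color_class_eq_0_iff[OF connected_corona[OF connected]
        finite_corona_vertices corona_coloring_is_coloring])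
    (use simple in \<open>auto simp: simple_graph_def empty_graph_vertices_def\<close>)

lemma corona_color_dist_eq_1_iff:
  "p \<in> CV \<Longrightarrow> i \<in> {1..m + 1} \<Longrightarrow>
   color_dist p i = 1 \<longleftrightarrow> corona_coloring f p \<noteq> i \<and> (\<exists>q\<in>CV. corona_coloring f q = i \<and> CE p q)"
  by (rule setdist_color_class_eq_1_iff[OF connected_corona[OF connected]
        finite_corona_vertices corona_coloring_is_coloring])
    (use simple in \<open>auto simp: simple_graph_def empty_graph_vertices_def\<close>)

lemma base_color_dist_le_1:
  assumes "a \<in> V" and i: "i \<in> {1..m + 1}"
  shows "color_dist (Inl a) i \<le> 1"
proof (cases "i = f a")
  case True
  then show ?thesis using corona_color_dist_eq_0_iff[of "Inl a" i] assms by simp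
next
  case False
  have "f a \<in> {1..m + 1}" using f_range assms(1) by auto
  then obtain x where "x < m" "corona_coloring f (Inr (a, x)) = i"
    using corona_coloring_leaf_colors[of f a m i] i False by blast
  moreover have "Inl a \<in> CV" "Inr (a, x) \<in> CV" "CE (Inl a) (Inr (a, x))"
    using assms \<open>x < m\<close> by simp_all
  ultimately show ?thesis
    using False corona_color_dist_eq_1_iff[of "Inl a" i] i by fastforce
qed

lemma leaf_color_dist_gt_1:
  assumes "a \<in> V" "x < m"
  shows "\<exists>i\<in>{1..m + 1}. 1 < color_dist (Inr (a, x)) i"
proof -
  have "\<exists>i\<in>{1, 2, 3}. i \<noteq> corona_coloring f (Inr (a, x)) \<and> i \<noteq> f a"
    by auto
  then obtain i where i: "i \<in> {1, 2, 3}" "i \<noteq> corona_coloring f (Inr (a, x))" "i \<noteq> f a"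
    by blast
  have "i \<in> {1..m + 1}" using i(1) m by auto
  with i assms show ?thesis
    using corona_color_dist_eq_0_iff[of "Inr (a, x)" i] corona_color_dist_eq_1_iff[of "Inr (a, x)" i]
    by (intro bexI[of _ i]) auto
qed

lemma corona_coloring_locating: "locating_coloring CV CE (m + 1) (corona_coloring f)"
  unfolding locating_coloring_def
proof (intro conjI corona_coloring_is_coloring inj_onI)
  fix p q assume p: "p \<in> CV" and q: "q \<in> CV"
    and "color_code CV CE (m + 1) (corona_coloring f) p = color_code CV CE (m + 1) (corona_coloring f) q"
  then have same_dist: "color_dist p i = color_dist q i" if "i \<in> {1..m + 1}" for i
    using that by (simp add: color_code_eq_iff)
  have same_color: "corona_coloring f p = corona_coloring f q"
    using same_dist corona_color_dist_eq_0_iff p q corona_coloring_range by metis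
  have base_leaf_differ: False if "a \<in> V" "b \<in> V" "y < m" "{p, q} = {Inl a, Inr (b, y)}" for a b y
    using leaf_color_dist_gt_1[of b y] base_color_dist_le_1[of a] same_dist that
    by (metis doubleton_eq_iff not_le)
  show "p = q"
    using p
  proof (cases rule: corona_vertices_cases)
    case (base a)
    from q show ?thesis
    proof (cases rule: corona_vertices_cases)
      case (base b)
      with \<open>p = Inl a\<close> \<open>a \<in> V\<close> same_color f_inj show ?thesis
        by (auto dest: inj_onD)
    qed (use base base_leaf_differ in auto)
  next
    case (leaf a x)
    from q show ?thesis
    proof (cases rule: corona_vertices_cases)
      case (leaf b y)
      have fa: "f a \<in> {1..m + 1}"
        using f_range \<open>a \<in> V\<close> by auto
      have "CE p (Inl a)" "Inl a \<in> CV"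
        using \<open>p = Inr (a, x)\<close> \<open>a \<in> V\<close> \<open>x \<in> _\<close> by simp_all
      then have "color_dist p (f a) = 1"
        using \<open>p = Inr (a, x)\<close> corona_color_dist_eq_1_iff[OF p fa] by auto
      then have "color_dist q (f a) = 1"
        using same_dist[OF fa] by simp
      then have "f b = f a"
        using \<open>q = Inr (b, y)\<close> corona_color_dist_eq_1_iff[OF q fa] by auto
      then have "a = b"
        using \<open>a \<in> V\<close> \<open>b \<in> V\<close> f_inj by (auto dest: inj_onD)
      with same_color \<open>p = Inr (a, x)\<close> \<open>q = Inr (b, y)\<close> show ?thesis
        using corona_coloring_leaf_inj[of f a x y] by simp
    qed (use leaf base_leaf_differ in auto)
  qed
qed

end

end

lemma inj_on_into_atLeastAtMost:
  assumes "finite V" and "card V \<le> k"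
  obtains f :: "'a \<Rightarrow> nat" where "inj_on f V" "f ` V \<subseteq> {1..k}"
proof -
  obtain h where h: "bij_betw h V {0..<card V}"
    using ex_bij_betw_finite_nat[OF assms(1)] by blast
  show ?thesis
  proof
    show "inj_on (Suc \<circ> h) V"
      using bij_betw_imp_inj_on[OF h] by (simp add: inj_on_def)
    have "h x < card V" if "x \<in> V" for x
      using bij_betwE[OF h] that by auto
    then show "(Suc \<circ> h) ` V \<subseteq> {1..k}"
      using assms(2) by fastforce
  qed
qed

theorem locating_chromatic_number_corona_edgeless:
  assumes "simple_graph V E" "connected_graph V E" "2 \<le> m" "card V \<le> m + 1"
  shows "locating_chromatic_number
           (corona_vertices V (empty_graph_vertices m))
           (corona_edge V E (empty_graph_vertices m) no_edges) = m + 1"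
  unfolding locating_chromatic_number_def
proof (rule Least_equality)
  have "finite V"
    using assms(1) by (simp add: simple_graph_def)
  then obtain f where f: "inj_on f V" "f ` V \<subseteq> {1..m + 1}"
    using assms(4) by (rule inj_on_into_atLeastAtMost)
  show "\<exists>c. locating_coloring (corona_vertices V (empty_graph_vertices m))
                  (corona_edge V E (empty_graph_vertices m) no_edges) (m + 1) c"
    using corona_coloring_locating[OF assms(1-3) f] by blast
next
  fix k
  assume "\<exists>c. locating_coloring (corona_vertices V (empty_graph_vertices m))
                (corona_edge V E (empty_graph_vertices m) no_edges) k c"
  then obtain c where c: "locating_coloring (corona_vertices V (empty_graph_vertices m))
                (corona_edge V E (empty_graph_vertices m) no_edges) k c" ..
  obtain a where a: "a \<in> V"
    using assms(2) by (auto simp: connected_graph_def)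
  show "m + 1 \<le> k"
    using corona_locating_coloring_ge[OF c a] .
qed

theorem theorem6:
  fixes V :: "'a set" and E :: "'a \<Rightarrow> 'a \<Rightarrow> bool" and m n :: nat
  assumes "m \<ge> 2" and "2 \<le> n" and "n \<le> m + 1"
    and "is_tree V E" and "card V = n"
  shows "locating_chromatic_number
           (corona_vertices V (empty_graph_vertices m))
           (corona_edge V E (empty_graph_vertices m) no_edges) = m + 1"
  using assms by (intro locating_chromatic_number_corona_edgeless) (auto simp: is_tree_def)

end
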